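(* Let $(t^\ell)_{\ell\in\mathbb{N}}$ be a sequence of positive numbers with $t^\ell\to0$. Suppose that for each $\ell$, $x^\ell\in M_{t^\ell}$ is a Karush-Kuhn-Tucker point of $\mathrm{MPOC}_{t^\ell}$, and that $x^\ell\to\bar x$. If $\bar x\in M$ and LICQ holds at $\bar x$, then $\bar x$ is a T-stationary point of MPOC.
   Context: MPOC: minimize $f(x)$ subject to $x\in M=\{x\in\mathbb{R}^n \mid h_i(x)=0,\ i\in I;\ g_j(x)\ge 0,\ j\in J;\ F_{1,m}(x)F_{2,m}(x)=0,\ F_{2,m}(x)\ge 0,\ m=1,\dots,k\}$, all functions $C^2$, $I,J$ finite. For $t>0$, the Scholtes-type regularization $\mathrm{MPOC}_t$ is the nonlinear program: minimize $f(x)$ subject to $x\in M_t=\{x\mid h_i(x)=0\ (i\in I),\ g_j(x)\ge0\ (j\in J),\ -t\le F_{1,m}(x)F_{2,m}(x)\le t,\ F_{2,m}(x)\ge0\ (m=1,\dots,k)\}$; a KKT point is a feasible point satisfying the standard Karush-Kuhn-Tucker conditions for this smooth program (gradient of $f$ equals a combination of constraint gradients with nonnegative multipliers for inequality constraints and complementary slackness). Index sets at $\bar x\in M$: $J_0(\bar x)=\{j\mid g_j(\bar x)=0\}$, $a_{00}(\bar x)=\{m\mid F_{1,m}(\bar x)=0=F_{2,m}(\bar x)\}$, $a_{01}(\bar x)=\{m\mid F_{1,m}(\bar x)=0,F_{2,m}(\bar x)>0\}$, $a_{10}(\bar x)=\{m\mid F_{1,m}(\bar x)\ne0,F_{2,m}(\bar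 x)=0\}$. LICQ at $\bar x$: $Dh_i(\bar x)$ ($i\in I$), $Dg_j(\bar x)$ ($j\in J_0(\bar x)$), $DF_{1,m}(\bar x)$ ($m\in a_{01}\cup a_{00}$), $DF_{2,m}(\bar x)$ ($m\in a_{10}\cup a_{00}$) linearly independent. T-stationary point: $\bar x\in M$ with multipliers $\bar\lambda_i,\bar\mu_j$ ($j\in J_0(\bar x)$), $\bar\sigma_{1,m}$ ($m\in a_{01}$), $\bar\sigma_{2,m}$ ($m\in a_{10}$), $\bar\varrho_{1,m},\bar\varrho_{2,m}$ ($m\in a_{00}$) such that $Df(\bar x)=\sum_{I}\bar\lambda_iDh_i+\sum_{J_0}\bar\mu_jDg_j+\sum_{a_{01}}\bar\sigma_{1,m}DF_{1,m}+\sum_{a_{10}}\bar\sigma_{2,m}DF_{2,m}+\sum_{a_{00}}(\bar\varrho_{1,m}DF_{1,m}+\bar\varrho_{2,m}DF_{2,m})$ (at $\bar x$), $\bar\mu_j\ge0$, and $\bar\varrho_{1,m}=0$ or $\bar\varrho_{2,m}\le0$ for each $m\in a_{00}(\bar x)$. *)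

theory Defs
  imports "HOL-Analysis.Analysis"
begin

definition grad :: "('a::euclidean_space \<Rightarrow> real) \<Rightarrow> 'a \<Rightarrow> 'a" where
  "grad \<phi> x = (\<Sum>i\<in>Basis. frechet_derivative \<phi> (at x) i *\<^sub>R i)"

definition C2 :: "('a::euclidean_space \<Rightarrow> real) \<Rightarrow> bool" where
  "C2 \<phi> \<longleftrightarrow> (\<forall>x. \<phi> differentiable (at x)) \<and> (\<forall>x. grad \<phi> differentiable (at x)) \<and>
     (\<forall>i\<in>Basis. \<forall>j\<in>Basis. continuous_on UNIV (\<lambda>x. frechet_derivative (grad \<phi>) (at x) i \<bullet> j))"

definition MPOC_feasible ::
  "(nat \<Rightarrow> 'a \<Rightarrow> real) \<Rightarrow> nat set \<Rightarrow> (nat \<Rightarrow> 'a \<Rightarrow> real) \<Rightarrow> nat set \<Rightarrow>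
   (nat \<Rightarrow> 'a \<Rightarrow> real) \<Rightarrow> (nat \<Rightarrow> 'a \<Rightarrow> real) \<Rightarrow> nat \<Rightarrow> 'a set" where
  "MPOC_feasible h I g J F1 F2 k = {x. (\<forall>i\<in>I. h i x = 0) \<and> (\<forall>j\<in>J. g j x \<ge> 0) \<and>
      (\<forall>m<k. F1 m x * F2 m x = 0 \<and> F2 m x \<ge> 0)}"

definition MPOC_reg_feasible ::
  "(nat \<Rightarrow> 'a \<Rightarrow> real) \<Rightarrow> nat set \<Rightarrow> (nat \<Rightarrow> 'a \<Rightarrow> real) \<Rightarrow> nat set \<Rightarrow>
   (nat \<Rightarrow> 'a \<Rightarrow> real) \<Rightarrow> (nat \<Rightarrow> 'a \<Rightarrow> real) \<Rightarrow> nat \<Rightarrow> real \<Rightarrow> 'a set" where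
  "MPOC_reg_feasible h I g J F1 F2 k t = {x. (\<forall>i\<in>I. h i x = 0) \<and> (\<forall>j\<in>J. g j x \<ge> 0) \<and>
      (\<forall>m<k. - t \<le> F1 m x * F2 m x \<and> F1 m x * F2 m x \<le> t \<and> F2 m x \<ge> 0)}"

text \<open>The constraint -t <= F1 F2 <= t is the pair of
  inequality constraints F1 F2 + t >= 0 (multiplier alpha) and t - F1 F2 >= 0 (multiplier beta);
  F2 >= 0 has multiplier nu.\<close>
definition KKT_reg ::
  "('a::euclidean_space \<Rightarrow> real) \<Rightarrow> (nat \<Rightarrow> 'a \<Rightarrow> real) \<Rightarrow> nat set \<Rightarrow> (nat \<Rightarrow> 'a \<Rightarrow> real) \<Rightarrow> nat set \<Rightarrow>
   (nat \<Rightarrow> 'a \<Rightarrow> real) \<Rightarrow> (nat \<Rightarrow> 'a \<Rightarrow> real) \<Rightarrow> nat \<Rightarrow> real \<Rightarrow> 'a \<Rightarrow> bool" where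
  "KKT_reg f h I g J F1 F2 k t x \<longleftrightarrow> x \<in> MPOC_reg_feasible h I g J F1 F2 k t \<and>
     (\<exists>(lam::nat \<Rightarrow> real) (mu::nat \<Rightarrow> real) (alpha::nat \<Rightarrow> real) (beta::nat \<Rightarrow> real) (nu::nat \<Rightarrow> real).
        grad f x = (\<Sum>i\<in>I. lam i *\<^sub>R grad (h i) x) + (\<Sum>j\<in>J. mu j *\<^sub>R grad (g j) x)
          + (\<Sum>m<k. alpha m *\<^sub>R grad (\<lambda>y. F1 m y * F2 m y + t) x)
          + (\<Sum>m<k. beta m *\<^sub>R grad (\<lambda>y. t - F1 m y * F2 m y) x)
          + (\<Sum>m<k. nu m *\<^sub>R grad (F2 m) x)
        \<and> (\<forall>j\<in>J. mu j \<ge> 0 \<and> mu j * g j x = 0)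
        \<and> (\<forall>m<k. alpha m \<ge> 0 \<and> alpha m * (F1 m x * F2 m x + t) = 0)
        \<and> (\<forall>m<k. beta m \<ge> 0 \<and> beta m * (t - F1 m x * F2 m x) = 0)
        \<and> (\<forall>m<k. nu m \<ge> 0 \<and> nu m * F2 m x = 0))"

definition J0 :: "(nat \<Rightarrow> 'a \<Rightarrow> real) \<Rightarrow> nat set \<Rightarrow> 'a \<Rightarrow> nat set" where
  "J0 g J x = {j\<in>J. g j x = 0}"
definition a00 :: "(nat \<Rightarrow> 'a \<Rightarrow> real) \<Rightarrow> (nat \<Rightarrow> 'a \<Rightarrow> real) \<Rightarrow> nat \<Rightarrow> 'a \<Rightarrow> nat set" where
  "a00 F1 F2 k x = {m. m < k \<and> F1 m x = 0 \<and> F2 m x = 0}"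
definition a01 :: "(nat \<Rightarrow> 'a \<Rightarrow> real) \<Rightarrow> (nat \<Rightarrow> 'a \<Rightarrow> real) \<Rightarrow> nat \<Rightarrow> 'a \<Rightarrow> nat set" where
  "a01 F1 F2 k x = {m. m < k \<and> F1 m x = 0 \<and> F2 m x > 0}"
definition a10 :: "(nat \<Rightarrow> 'a \<Rightarrow> real) \<Rightarrow> (nat \<Rightarrow> 'a \<Rightarrow> real) \<Rightarrow> nat \<Rightarrow> 'a \<Rightarrow> nat set" where
  "a10 F1 F2 k x = {m. m < k \<and> F1 m x \<noteq> 0 \<and> F2 m x = 0}"

definition LICQ ::
  "(nat \<Rightarrow> 'a::euclidean_space \<Rightarrow> real) \<Rightarrow> nat set \<Rightarrow> (nat \<Rightarrow> 'a \<Rightarrow> real) \<Rightarrow> nat set \<Rightarrow>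
   (nat \<Rightarrow> 'a \<Rightarrow> real) \<Rightarrow> (nat \<Rightarrow> 'a \<Rightarrow> real) \<Rightarrow> nat \<Rightarrow> 'a \<Rightarrow> bool" where
  "LICQ h I g J F1 F2 k x \<longleftrightarrow>
     (\<forall>(c::nat \<Rightarrow> real) (d::nat \<Rightarrow> real) (e1::nat \<Rightarrow> real) (e2::nat \<Rightarrow> real).
        (\<Sum>i\<in>I. c i *\<^sub>R grad (h i) x) + (\<Sum>j\<in>J0 g J x. d j *\<^sub>R grad (g j) x)
        + (\<Sum>m\<in>a01 F1 F2 k x \<union> a00 F1 F2 k x. e1 m *\<^sub>R grad (F1 m) x)
        + (\<Sum>m\<in>a10 F1 F2 k x \<union> a00 F1 F2 k x. e2 m *\<^sub>R grad (F2 m) x) = 0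
        \<longrightarrow> (\<forall>i\<in>I. c i = 0) \<and> (\<forall>j\<in>J0 g J x. d j = 0)
            \<and> (\<forall>m\<in>a01 F1 F2 k x \<union> a00 F1 F2 k x. e1 m = 0)
            \<and> (\<forall>m\<in>a10 F1 F2 k x \<union> a00 F1 F2 k x. e2 m = 0))"

definition T_stationary ::
  "('a::euclidean_space \<Rightarrow> real) \<Rightarrow> (nat \<Rightarrow> 'a \<Rightarrow> real) \<Rightarrow> nat set \<Rightarrow> (nat \<Rightarrow> 'a \<Rightarrow> real) \<Rightarrow> nat set \<Rightarrow>
   (nat \<Rightarrow> 'a \<Rightarrow> real) \<Rightarrow> (nat \<Rightarrow> 'a \<Rightarrow> real) \<Rightarrow> nat \<Rightarrow> 'a \<Rightarrow> bool" where
  "T_stationary f h I g J F1 F2 k x \<longleftrightarrow> x \<in> MPOC_feasible h I g J F1 F2 k \<and>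
     (\<exists>(lam::nat \<Rightarrow> real) (mu::nat \<Rightarrow> real) (s1::nat \<Rightarrow> real) (s2::nat \<Rightarrow> real)
        (r1::nat \<Rightarrow> real) (r2::nat \<Rightarrow> real).
        grad f x = (\<Sum>i\<in>I. lam i *\<^sub>R grad (h i) x) + (\<Sum>j\<in>J0 g J x. mu j *\<^sub>R grad (g j) x)
          + (\<Sum>m\<in>a01 F1 F2 k x. s1 m *\<^sub>R grad (F1 m) x)
          + (\<Sum>m\<in>a10 F1 F2 k x. s2 m *\<^sub>R grad (F2 m) x)
          + (\<Sum>m\<in>a00 F1 F2 k x. r1 m *\<^sub>R grad (F1 m) x + r2 m *\<^sub>R grad (F2 m) x)
        \<and> (\<forall>j\<in>J0 g J x. mu j \<ge> 0)
        \<and> (\<forall>m\<in>a00 F1 F2 k x. r1 m = 0 \<or> r2 m \<le> 0))"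

end

theory Submission
  imports Defs
begin

text \<open>At a KKT point of the regularized problem the multipliers of the three constraints
  attached to the m-th orthogonality pair combine, by the product rule, into a coefficient
  \<open>a m\<close> of \<open>DF1_m\<close> and \<open>b m\<close> of \<open>DF2_m\<close>; complementarity and \<open>t > 0\<close> force \<open>b m \<le> 0\<close>
  whenever \<open>a m \<noteq> 0\<close>. Near \<open>xbar\<close> the multipliers of inactive inequalities vanish, and for
  indices in \<open>a01\<close> (resp. \<open>a10\<close>) the two gradients merge into one vector converging to
  \<open>DF1_m\<close> (resp. \<open>DF2_m\<close>). So \<open>Df(x\<^sup>l)\<close> is a combination of vectors converging to the LICQ
  family at \<open>xbar\<close>, whose linear independence makes the coefficients converge; the sign
  conditions pass to the limit.\<close>

definition independent_family :: "'p set \<Rightarrow> ('p \<Rightarrow> 'a::real_vector) \<Rightarrow> bool" where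
  "independent_family P v \<longleftrightarrow> (\<forall>c. (\<Sum>p\<in>P. c p *\<^sub>R v p) = 0 \<longrightarrow> (\<forall>p\<in>P. c p = 0))"

lemma span_image_eq_sum:
  fixes f :: "'p \<Rightarrow> 'a::real_vector"
  assumes "finite S" and "y \<in> span (f ` S)"
  obtains c where "y = (\<Sum>s\<in>S. c s *\<^sub>R f s)"
proof -
  from assms(2) have "\<exists>c. y = (\<Sum>s\<in>S. c s *\<^sub>R f s)"
  proof (induction rule: span_induct_alt)
    case base
    show ?case by (intro exI[of _ "\<lambda>_. 0"]) simp
  next
    case (step r z y)
    then obtain s0 d where "s0 \<in> S" "z = f s0" "y = (\<Sum>s\<in>S. d s *\<^sub>R f s)" by blast
    then show ?case using assms(1)
      by (intro exI[of _ "\<lambda>s. d s + (if s = s0 then r else 0)"])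
         (simp add: scaleR_add_left sum.distrib if_distrib[of "\<lambda>a. a *\<^sub>R _"] sum.delta cong: if_cong)
  qed
  then show thesis using that by blast
qed

lemma independent_family_dual_vector:
  fixes v :: "'p \<Rightarrow> 'a::euclidean_space"
  assumes "finite P" and "independent_family P v" and "p \<in> P"
  obtains w where "\<And>q. q \<in> P \<Longrightarrow> v q \<bullet> w = (if q = p then 1 else 0)"
proof -
  obtain y z where y: "y \<in> span (v ` (P - {p}))"
    and z: "\<And>u. u \<in> span (v ` (P - {p})) \<Longrightarrow> orthogonal z u" and yz: "v p = y + z"
    using orthogonal_subspace_decomp_exists[of "v ` (P - {p})" "v p"] by metis
  have "z \<noteq> 0"
  proof
    assume "z = 0"
    with y yz obtain d where d: "v p = (\<Sum>s\<in>P - {p}. d s *\<^sub>R v s)"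
      using span_image_eq_sum[of "P - {p}"] assms(1) by auto
    have "(\<Sum>s\<in>P. (if s = p then -1 else d s) *\<^sub>R v s) = 0"
      using assms(1,3) d by (simp add: sum.remove if_distrib[of "\<lambda>a. a *\<^sub>R _"] sum.If_cases)
    with assms(2,3) show False unfolding independent_family_def by force
  qed
  have "y \<bullet> z = 0" using z[OF y] by (simp add: orthogonal_def inner_commute)
  moreover have "v q \<bullet> z = 0" if "q \<in> P" "q \<noteq> p" for q
    using z[of "v q"] that by (simp add: span_base orthogonal_def inner_commute)
  ultimately show thesis
    using \<open>z \<noteq> 0\<close> by (intro that[of "z /\<^sub>R (z \<bullet> z)"]) (auto simp: yz inner_add_left)
qed

lemma independent_family_biorthogonal:
  fixes v :: "'p \<Rightarrow> 'a::euclidean_space"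
  assumes "finite P" and "independent_family P v"
  obtains W where "\<And>p q. p \<in> P \<Longrightarrow> q \<in> P \<Longrightarrow> v q \<bullet> W p = (if q = p then 1 else 0)"
proof -
  have "\<forall>p\<in>P. \<exists>w. \<forall>q\<in>P. v q \<bullet> w = (if q = p then 1 else 0)"
    using independent_family_dual_vector[OF assms] by metis
  then show thesis using that by (metis bchoice)
qed

lemma coefficient_eq_inner_dual:
  fixes vb :: "'p \<Rightarrow> 'a::real_inner"
  assumes "finite P" and "p \<in> P"
    and dual: "\<And>q. q \<in> P \<Longrightarrow> vb q \<bullet> w = (if q = p then 1 else 0)"
    and y: "y = (\<Sum>q\<in>P. c q *\<^sub>R v q)"
  shows "c p = (y - (\<Sum>q\<in>P. c q *\<^sub>R (v q - vb q))) \<bullet> w"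
proof -
  have "y - (\<Sum>q\<in>P. c q *\<^sub>R (v q - vb q)) = (\<Sum>q\<in>P. c q *\<^sub>R vb q)"
    unfolding y by (simp add: sum_subtractf[symmetric] scaleR_diff_right)
  also have "\<dots> \<bullet> w = (\<Sum>q\<in>P. if q = p then c q else 0)"
    by (auto simp: inner_sum_left dual intro: sum.cong)
  finally show ?thesis using assms(1,2) by simp
qed

lemma norm_sum_scaleR_diff_le:
  fixes u w :: "'p \<Rightarrow> 'a::real_normed_vector"
  assumes "finite P"
  shows "norm (\<Sum>q\<in>P. c q *\<^sub>R (u q - w q)) \<le> (\<Sum>q\<in>P. \<bar>c q\<bar>) * (\<Sum>q\<in>P. norm (u q - w q))"
proof -
  have "norm (\<Sum>q\<in>P. c q *\<^sub>R (u q - w q)) \<le> (\<Sum>q\<in>P. \<bar>c q\<bar> * norm (u q - w q))"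
    by (rule order_trans[OF norm_sum]) simp
  also have "\<dots> \<le> (\<Sum>q\<in>P. (\<Sum>q\<in>P. \<bar>c q\<bar>) * norm (u q - w q))"
    using assms by (intro sum_mono mult_right_mono member_le_sum) auto
  finally show ?thesis by (simp add: sum_distrib_left)
qed

lemma independent_family_coefficients_bounded:
  fixes vb :: "'p \<Rightarrow> 'a::euclidean_space"
  assumes "finite P" and "independent_family P vb"
    and v: "\<And>p. p \<in> P \<Longrightarrow> (\<lambda>l. v p l) \<longlonglongrightarrow> vb p"
    and "Bseq y"
    and rep: "eventually (\<lambda>l. y l = (\<Sum>p\<in>P. c l p *\<^sub>R v p l)) sequentially"
  obtains C where "eventually (\<lambda>l. (\<Sum>p\<in>P. \<bar>c l p\<bar>) \<le> C) sequentially"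
proof -
  obtain W where W: "\<And>p q. p \<in> P \<Longrightarrow> q \<in> P \<Longrightarrow> vb q \<bullet> W p = (if q = p then 1 else 0)"
    using independent_family_biorthogonal[OF assms(1,2)] by blast
  obtain B where B: "\<And>l. norm (y l) \<le> B" using \<open>Bseq y\<close> by (metis BseqE)
  define WB where "WB = (\<Sum>p\<in>P. norm (W p))"
  define \<delta> where "\<delta> l = (\<Sum>q\<in>P. norm (v q l - vb q))" for l
  have "\<delta> \<longlonglongrightarrow> 0"
    unfolding \<delta>_def by (intro tendsto_null_sum tendsto_norm_zero LIM_zero v)
  then have "eventually (\<lambda>l. \<delta> l < 1 / (2 * (WB + 1))) sequentially"
    by (rule order_tendstoD) (simp add: WB_def sum_nonneg add_nonneg_pos)
  \<comment> \<open>The dual vectors read off the coefficients up to an error of size \<open>M * \<delta> l\<close>, which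
    is absorbed into \<open>M\<close> once \<open>\<delta> l\<close> is small.\<close>
  with rep have "eventually (\<lambda>l. (\<Sum>p\<in>P. \<bar>c l p\<bar>) \<le> 2 * B * WB) sequentially"
  proof eventually_elim
    case (elim l)
    define M where "M = (\<Sum>p\<in>P. \<bar>c l p\<bar>)"
    define r where "r = (\<Sum>q\<in>P. c l q *\<^sub>R (v q l - vb q))"
    have WB0: "WB \<ge> 0" and \<delta>0: "\<delta> l \<ge> 0" by (simp_all add: WB_def \<delta>_def sum_nonneg)
    have "M = (\<Sum>p\<in>P. \<bar>(y l - r) \<bullet> W p\<bar>)"
      unfolding M_def r_def using coefficient_eq_inner_dual[OF assms(1) _ W elim(1)] by simp
    also have "\<dots> \<le> (\<Sum>p\<in>P. norm (y l - r) * norm (W p))"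
      by (intro sum_mono Cauchy_Schwarz_ineq2)
    also have "\<dots> = norm (y l - r) * WB" by (simp add: WB_def sum_distrib_left)
    also have "\<dots> \<le> (B + M * \<delta> l) * WB"
    proof (rule mult_right_mono[OF _ WB0])
      have "norm r \<le> M * \<delta> l"
        unfolding r_def M_def \<delta>_def by (rule norm_sum_scaleR_diff_le[OF assms(1)])
      then show "norm (y l - r) \<le> B + M * \<delta> l"
        using norm_triangle_ineq4[of "y l" r] B[of l] by linarith
    qed
    also have "\<dots> \<le> B * WB + M / 2"
    proof -
      have "\<delta> l * WB \<le> \<delta> l * (WB + 1)" using \<delta>0 by (simp add: mult_left_mono)
      also have "\<dots> \<le> 1 / 2" using elim(2) WB0 by (simp add: field_simps)
      finally have "M * (\<delta> l * WB) \<le> M * (1 / 2)"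
        by (rule mult_left_mono) (simp add: M_def sum_nonneg)
      then show ?thesis by (simp add: algebra_simps)
    qed
    finally show ?case unfolding M_def by simp
  qed
  then show thesis by (rule that)
qed

lemma independent_family_coefficients_tendsto:
  fixes vb :: "'p \<Rightarrow> 'a::euclidean_space"
  assumes "finite P" and "independent_family P vb"
    and v: "\<And>p. p \<in> P \<Longrightarrow> (\<lambda>l. v p l) \<longlonglongrightarrow> vb p"
    and y: "y \<longlonglongrightarrow> yb"
    and rep: "eventually (\<lambda>l. y l = (\<Sum>p\<in>P. c l p *\<^sub>R v p l)) sequentially"
  obtains cb where "\<And>p. p \<in> P \<Longrightarrow> (\<lambda>l. c l p) \<longlonglongrightarrow> cb p" and "yb = (\<Sum>p\<in>P. cb p *\<^sub>R vb p)"
proof -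
  obtain W where W: "\<And>p q. p \<in> P \<Longrightarrow> q \<in> P \<Longrightarrow> vb q \<bullet> W p = (if q = p then 1 else 0)"
    using independent_family_biorthogonal[OF assms(1,2)] by blast
  obtain C where C: "eventually (\<lambda>l. (\<Sum>p\<in>P. \<bar>c l p\<bar>) \<le> C) sequentially"
    using independent_family_coefficients_bounded[OF assms(1,2) v _ rep]
      convergent_imp_Bseq[OF convergentI[OF y]] by blast
  define r where "r l = (\<Sum>q\<in>P. c l q *\<^sub>R (v q l - vb q))" for l
  have "(\<lambda>l. C * (\<Sum>q\<in>P. norm (v q l - vb q))) \<longlonglongrightarrow> C * 0"
    by (intro tendsto_mult_left tendsto_null_sum tendsto_norm_zero LIM_zero v)
  moreover have "eventually (\<lambda>l. norm (r l) \<le> C * (\<Sum>q\<in>P. norm (v q l - vb q))) sequentially"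
    using C
  proof eventually_elim
    case (elim l)
    then show ?case
      unfolding r_def
      by (rule order_trans[OF norm_sum_scaleR_diff_le[OF assms(1)] mult_right_mono])
         (simp add: sum_nonneg)
  qed
  ultimately have r: "r \<longlonglongrightarrow> 0" by (intro Lim_null_comparison[of r]) simp_all
  define cb where "cb p = yb \<bullet> W p" for p
  have c: "(\<lambda>l. c l p) \<longlonglongrightarrow> cb p" if "p \<in> P" for p
  proof -
    have "(\<lambda>l. (y l - r l) \<bullet> W p) \<longlonglongrightarrow> (yb - 0) \<bullet> W p"
      by (intro tendsto_inner tendsto_diff y r tendsto_const)
    moreover have "eventually (\<lambda>l. (y l - r l) \<bullet> W p = c l p) sequentially"
      using rep
    proof eventually_elim
      case (elim l)
      show ?case unfolding r_def by (rule coefficient_eq_inner_dual[OF assms(1) that W[OF that] elim, symmetric])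
    qed
    ultimately show ?thesis unfolding cb_def by (simp add: Lim_transform_eventually[where F=sequentially])
  qed
  have "(\<lambda>l. \<Sum>p\<in>P. c l p *\<^sub>R v p l) \<longlonglongrightarrow> (\<Sum>p\<in>P. cb p *\<^sub>R vb p)"
    by (intro tendsto_sum tendsto_scaleR c v)
  then have "y \<longlonglongrightarrow> (\<Sum>p\<in>P. cb p *\<^sub>R vb p)"
    by (rule Lim_transform_eventually) (use rep in \<open>auto elim: eventually_mono\<close>)
  with y have "yb = (\<Sum>p\<in>P. cb p *\<^sub>R vb p)" by (rule LIMSEQ_unique)
  with c show thesis by (rule that)
qed

lemma grad_eq_sum_derivative:
  assumes "(\<phi> has_derivative D) (at x)"
  shows "grad \<phi> x = (\<Sum>i\<in>Basis. D i *\<^sub>R i)"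
  using assms unfolding grad_def by (simp add: frechet_derivative_at[symmetric])

lemma grad_product_shift:
  fixes \<phi> \<psi> :: "'a::euclidean_space \<Rightarrow> real"
  assumes "\<phi> differentiable at x" and "\<psi> differentiable at x"
  shows "grad (\<lambda>y. \<phi> y * \<psi> y + c) x = \<psi> x *\<^sub>R grad \<phi> x + \<phi> x *\<^sub>R grad \<psi> x"
    and "grad (\<lambda>y. c - \<phi> y * \<psi> y) x = - (\<psi> x *\<^sub>R grad \<phi> x + \<phi> x *\<^sub>R grad \<psi> x)"
proof -
  let ?D1 = "frechet_derivative \<phi> (at x)" and ?D2 = "frechet_derivative \<psi> (at x)"
  have prod: "((\<lambda>y. \<phi> y * \<psi> y) has_derivative (\<lambda>v. \<phi> x * ?D2 v + ?D1 v * \<psi> x)) (at x)"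
    using assms by (intro has_derivative_mult) (simp_all add: frechet_derivative_works)
  have sum: "(\<Sum>i\<in>Basis. (\<phi> x * ?D2 i + ?D1 i * \<psi> x) *\<^sub>R i) = \<psi> x *\<^sub>R grad \<phi> x + \<phi> x *\<^sub>R grad \<psi> x"
    unfolding grad_def by (simp add: scaleR_add_left sum.distrib scaleR_sum_right algebra_simps)
  show "grad (\<lambda>y. \<phi> y * \<psi> y + c) x = \<psi> x *\<^sub>R grad \<phi> x + \<phi> x *\<^sub>R grad \<psi> x"
    using grad_eq_sum_derivative[OF has_derivative_add_const[OF prod]] sum by simp
  have "grad (\<lambda>y. c - \<phi> y * \<psi> y) x = (\<Sum>i\<in>Basis. (- (\<phi> x * ?D2 i + ?D1 i * \<psi> x)) *\<^sub>R i)"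
    using grad_eq_sum_derivative[OF has_derivative_diff[OF has_derivative_const prod]] by simp
  also have "\<dots> = - (\<Sum>i\<in>Basis. (\<phi> x * ?D2 i + ?D1 i * \<psi> x) *\<^sub>R i)"
    by (simp only: scaleR_minus_left sum_negf)
  finally show "grad (\<lambda>y. c - \<phi> y * \<psi> y) x = - (\<psi> x *\<^sub>R grad \<phi> x + \<phi> x *\<^sub>R grad \<psi> x)"
    using sum by simp
qed

\<comment> \<open>As \<open>t > 0\<close>, the bounds \<open>-t \<le> u w\<close> and \<open>u w \<le> t\<close> are never active together, and
  the active one fixes the sign of \<open>u\<close>.\<close>
lemma regularized_multiplier_sign:
  fixes \<alpha> \<beta> \<nu> u w t :: real
  assumes "t > 0" and "w \<ge> 0"
    and "\<alpha> \<ge> 0" and "\<alpha> * (u * w + t) = 0" and "\<beta> \<ge> 0" and "\<beta> * (t - u * w) = 0"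
    and "\<nu> * w = 0" and "(\<alpha> - \<beta>) * w \<noteq> 0"
  shows "(\<alpha> - \<beta>) * u + \<nu> \<le> 0"
proof -
  have "w > 0" and "\<nu> = 0" using assms by auto
  show ?thesis
  proof (cases "\<alpha> = 0")
    case True
    with assms have "u * w = t" by auto
    with \<open>w > 0\<close> \<open>t > 0\<close> have "u > 0" by (metis zero_less_mult_pos2)
    with True \<open>\<nu> = 0\<close> \<open>\<beta> \<ge> 0\<close> show ?thesis by simp
  next
    case False
    with assms have "u * w = - t" by auto
    with \<open>w > 0\<close> \<open>t > 0\<close> have "u < 0" by (smt (verit) mult_nonneg_nonneg)
    moreover have "\<beta> = 0" using assms \<open>u * w = - t\<close> by simp
    ultimately show ?thesis using \<open>\<nu> = 0\<close> \<open>\<alpha> \<ge> 0\<close> by (simp add: mult_nonneg_nonpos)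
  qed
qed

definition reduced_KKT ::
  "('a::euclidean_space \<Rightarrow> real) \<Rightarrow> (nat \<Rightarrow> 'a \<Rightarrow> real) \<Rightarrow> nat set \<Rightarrow> (nat \<Rightarrow> 'a \<Rightarrow> real) \<Rightarrow> nat set \<Rightarrow>
   (nat \<Rightarrow> 'a \<Rightarrow> real) \<Rightarrow> (nat \<Rightarrow> 'a \<Rightarrow> real) \<Rightarrow> nat \<Rightarrow> 'a \<Rightarrow>
   (nat \<Rightarrow> real) \<Rightarrow> (nat \<Rightarrow> real) \<Rightarrow> (nat \<Rightarrow> real) \<Rightarrow> (nat \<Rightarrow> real) \<Rightarrow> bool" where
  "reduced_KKT f h I g J F1 F2 k y lam mu a b \<longleftrightarrow>
     grad f y = (\<Sum>i\<in>I. lam i *\<^sub>R grad (h i) y) + (\<Sum>j\<in>J. mu j *\<^sub>R grad (g j) y)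
       + (\<Sum>m<k. a m *\<^sub>R grad (F1 m) y + b m *\<^sub>R grad (F2 m) y)
     \<and> (\<forall>j\<in>J. mu j \<ge> 0 \<and> mu j * g j y = 0)
     \<and> (\<forall>m<k. a m \<noteq> 0 \<longrightarrow> b m \<le> 0)
     \<and> (\<forall>m<k. F2 m y > 0 \<longrightarrow> b m = a m * (F1 m y / F2 m y))
     \<and> (\<forall>m<k. F1 m y \<noteq> 0 \<longrightarrow> a m = b m * (F2 m y / F1 m y))"

lemma KKT_reg_imp_reduced_KKT:
  assumes KKT: "KKT_reg f h I g J F1 F2 k t y" and "t > 0"
    and diff: "\<And>m. m < k \<Longrightarrow> F1 m differentiable at y \<and> F2 m differentiable at y"
  shows "\<exists>lam mu a b. reduced_KKT f h I g J F1 F2 k y lam mu a b"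
proof -
  obtain lam mu \<alpha> \<beta> \<nu> where
    grad: "grad f y = (\<Sum>i\<in>I. lam i *\<^sub>R grad (h i) y) + (\<Sum>j\<in>J. mu j *\<^sub>R grad (g j) y)
          + (\<Sum>m<k. \<alpha> m *\<^sub>R grad (\<lambda>z. F1 m z * F2 m z + t) y)
          + (\<Sum>m<k. \<beta> m *\<^sub>R grad (\<lambda>z. t - F1 m z * F2 m z) y)
          + (\<Sum>m<k. \<nu> m *\<^sub>R grad (F2 m) y)"
    and mu: "\<forall>j\<in>J. mu j \<ge> 0 \<and> mu j * g j y = 0"
    and \<alpha>: "\<forall>m<k. \<alpha> m \<ge> 0 \<and> \<alpha> m * (F1 m y * F2 m y + t) = 0"
    and \<beta>: "\<forall>m<k. \<beta> m \<ge> 0 \<and> \<beta> m * (t - F1 m y * F2 m y) = 0"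
    and \<nu>: "\<forall>m<k. \<nu> m \<ge> 0 \<and> \<nu> m * F2 m y = 0"
    using KKT unfolding KKT_reg_def by blast
  have F2: "F2 m y \<ge> 0" if "m < k" for m
    using KKT that by (auto simp: KKT_reg_def MPOC_reg_feasible_def)
  define a where "a m = (\<alpha> m - \<beta> m) * F2 m y" for m
  define b where "b m = (\<alpha> m - \<beta> m) * F1 m y + \<nu> m" for m
  have "(\<Sum>m<k. \<alpha> m *\<^sub>R grad (\<lambda>z. F1 m z * F2 m z + t) y)
          + (\<Sum>m<k. \<beta> m *\<^sub>R grad (\<lambda>z. t - F1 m z * F2 m z) y)
          + (\<Sum>m<k. \<nu> m *\<^sub>R grad (F2 m) y)
        = (\<Sum>m<k. a m *\<^sub>R grad (F1 m) y + b m *\<^sub>R grad (F2 m) y)"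
    unfolding sum.distrib[symmetric]
  proof (rule sum.cong[OF refl])
    fix m assume "m \<in> {..<k}"
    then have d: "F1 m differentiable at y" "F2 m differentiable at y" using diff by auto
    then show "\<alpha> m *\<^sub>R grad (\<lambda>z. F1 m z * F2 m z + t) y + \<beta> m *\<^sub>R grad (\<lambda>z. t - F1 m z * F2 m z) y
        + \<nu> m *\<^sub>R grad (F2 m) y = a m *\<^sub>R grad (F1 m) y + b m *\<^sub>R grad (F2 m) y"
      by (simp only: grad_product_shift[OF d]) (simp add: a_def b_def algebra_simps)
  qed
  then have "grad f y = (\<Sum>i\<in>I. lam i *\<^sub>R grad (h i) y) + (\<Sum>j\<in>J. mu j *\<^sub>R grad (g j) y)
       + (\<Sum>m<k. a m *\<^sub>R grad (F1 m) y + b m *\<^sub>R grad (F2 m) y)"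
    using grad by (simp add: add.assoc)
  moreover have "b m \<le> 0" if "m < k" "a m \<noteq> 0" for m
    unfolding b_def
    using regularized_multiplier_sign[OF \<open>t > 0\<close> F2] \<alpha> \<beta> \<nu> that by (auto simp: a_def)
  moreover have "b m = a m * (F1 m y / F2 m y)" if "m < k" "F2 m y > 0" for m
    using \<nu> that by (auto simp: a_def b_def)
  moreover have "a m = b m * (F2 m y / F1 m y)" if "m < k" "F1 m y \<noteq> 0" for m
    using \<nu> that by (auto simp: a_def b_def field_simps)
  ultimately show ?thesis
    unfolding reduced_KKT_def using mu by blast
qed

datatype constraint_kind = Equality | Inequality | Orth1 | Orth2

definition tagged_index :: "nat set \<Rightarrow> nat set \<Rightarrow> nat set \<Rightarrow> nat set \<Rightarrow> (constraint_kind \<times> nat) set" where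
  "tagged_index I J A B = Pair Equality ` I \<union> Pair Inequality ` J \<union> Pair Orth1 ` A \<union> Pair Orth2 ` B"

fun tagged_family :: "(nat \<Rightarrow> 'b) \<Rightarrow> (nat \<Rightarrow> 'b) \<Rightarrow> (nat \<Rightarrow> 'b) \<Rightarrow> (nat \<Rightarrow> 'b) \<Rightarrow> constraint_kind \<times> nat \<Rightarrow> 'b" where
  "tagged_family u _ _ _ (Equality, i) = u i"
| "tagged_family _ u _ _ (Inequality, i) = u i"
| "tagged_family _ _ u _ (Orth1, i) = u i"
| "tagged_family _ _ _ u (Orth2, i) = u i"

lemma finite_tagged_index [simp]:
  "finite (tagged_index I J A B) \<longleftrightarrow> finite I \<and> finite J \<and> finite A \<and> finite B"
  by (auto simp: tagged_index_def dest: finite_imageD simp: inj_on_def)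

lemma sum_tagged_index:
  assumes "finite I" "finite J" "finite A" "finite B"
  shows "(\<Sum>p\<in>tagged_index I J A B. u p)
    = (\<Sum>i\<in>I. u (Equality, i)) + (\<Sum>j\<in>J. u (Inequality, j)) + (\<Sum>m\<in>A. u (Orth1, m)) + (\<Sum>m\<in>B. u (Orth2, m))"
  unfolding tagged_index_def using assms
  by (subst sum.union_disjoint, auto)+ (simp_all add: sum.reindex inj_on_def)

lemma MPOC_feasible_index_partition:
  assumes "x \<in> MPOC_feasible h I g J F1 F2 k"
  shows "{..<k} = a01 F1 F2 k x \<union> a10 F1 F2 k x \<union> a00 F1 F2 k x"
  using assms by (force simp: MPOC_feasible_def a01_def a10_def a00_def less_le)

definition constraint_grads :: "(nat \<Rightarrow> 'a::euclidean_space \<Rightarrow> real) \<Rightarrow> (nat \<Rightarrow> 'a \<Rightarrow> real) \<Rightarrow>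
    (nat \<Rightarrow> 'a \<Rightarrow> real) \<Rightarrow> (nat \<Rightarrow> 'a \<Rightarrow> real) \<Rightarrow> 'a \<Rightarrow> constraint_kind \<times> nat \<Rightarrow> 'a" where
  "constraint_grads h g F1 F2 y =
     tagged_family (\<lambda>i. grad (h i) y) (\<lambda>j. grad (g j) y) (\<lambda>m. grad (F1 m) y) (\<lambda>m. grad (F2 m) y)"

definition LICQ_index :: "nat set \<Rightarrow> (nat \<Rightarrow> 'a \<Rightarrow> real) \<Rightarrow> nat set \<Rightarrow> (nat \<Rightarrow> 'a \<Rightarrow> real) \<Rightarrow>
    (nat \<Rightarrow> 'a \<Rightarrow> real) \<Rightarrow> nat \<Rightarrow> 'a \<Rightarrow> (constraint_kind \<times> nat) set" where
  "LICQ_index I g J F1 F2 k y = tagged_index I (J0 g J y)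
     (a01 F1 F2 k y \<union> a00 F1 F2 k y) (a10 F1 F2 k y \<union> a00 F1 F2 k y)"

lemma finite_LICQ_index: "finite I \<Longrightarrow> finite J \<Longrightarrow> finite (LICQ_index I g J F1 F2 k y)"
  by (simp add: LICQ_index_def J0_def a01_def a10_def a00_def)

lemma LICQ_imp_independent_family:
  assumes "finite I" "finite J" "LICQ h I g J F1 F2 k y"
  shows "independent_family (LICQ_index I g J F1 F2 k y) (constraint_grads h g F1 F2 y)"
  unfolding independent_family_def
proof (intro allI impI)
  fix c assume "(\<Sum>p\<in>LICQ_index I g J F1 F2 k y. c p *\<^sub>R constraint_grads h g F1 F2 y p) = 0"
  then have "(\<Sum>i\<in>I. c (Equality, i) *\<^sub>R grad (h i) y) + (\<Sum>j\<in>J0 g J y. c (Inequality, j) *\<^sub>R grad (g j) y)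
      + (\<Sum>m\<in>a01 F1 F2 k y \<union> a00 F1 F2 k y. c (Orth1, m) *\<^sub>R grad (F1 m) y)
      + (\<Sum>m\<in>a10 F1 F2 k y \<union> a00 F1 F2 k y. c (Orth2, m) *\<^sub>R grad (F2 m) y) = 0"
    unfolding LICQ_index_def constraint_grads_def using assms(1,2)
    by (subst (asm) sum_tagged_index) (simp_all add: J0_def a01_def a10_def a00_def)
  from assms(3)[unfolded LICQ_def, rule_format, OF this]
  show "\<forall>p\<in>LICQ_index I g J F1 F2 k y. c p = 0"
    unfolding LICQ_index_def tagged_index_def by auto
qed

lemma sum_LICQ_index_constraint_grads:
  assumes "finite I" "finite J"
  shows "(\<Sum>p\<in>LICQ_index I g J F1 F2 k y. c p *\<^sub>R constraint_grads h g F1 F2 y p)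
    = (\<Sum>i\<in>I. c (Equality, i) *\<^sub>R grad (h i) y) + (\<Sum>j\<in>J0 g J y. c (Inequality, j) *\<^sub>R grad (g j) y)
      + (\<Sum>m\<in>a01 F1 F2 k y. c (Orth1, m) *\<^sub>R grad (F1 m) y)
      + (\<Sum>m\<in>a10 F1 F2 k y. c (Orth2, m) *\<^sub>R grad (F2 m) y)
      + (\<Sum>m\<in>a00 F1 F2 k y. c (Orth1, m) *\<^sub>R grad (F1 m) y + c (Orth2, m) *\<^sub>R grad (F2 m) y)"
proof -
  have fin: "finite (J0 g J y)" "finite (a01 F1 F2 k y)" "finite (a10 F1 F2 k y)" "finite (a00 F1 F2 k y)"
    using assms(2) by (auto simp: J0_def a01_def a10_def a00_def)
  have "a01 F1 F2 k y \<inter> a00 F1 F2 k y = {}" "a10 F1 F2 k y \<inter> a00 F1 F2 k y = {}"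
    by (auto simp: a01_def a10_def a00_def)
  with assms(1) fin show ?thesis
    unfolding LICQ_index_def constraint_grads_def
    by (simp add: sum_tagged_index sum.union_disjoint sum.distrib ac_simps)
qed

lemma sum_pairs_regroup:
  fixes u w :: "nat \<Rightarrow> 'a::real_vector"
  assumes "finite K" and K: "K = A01 \<union> A10 \<union> A00"
    and "A01 \<inter> A10 = {}" "A01 \<inter> A00 = {}" "A10 \<inter> A00 = {}"
    and r: "\<And>m. m \<in> A01 \<Longrightarrow> b m = a m * r m" and s: "\<And>m. m \<in> A10 \<Longrightarrow> a m = b m * s m"
  shows "(\<Sum>m\<in>K. a m *\<^sub>R u m + b m *\<^sub>R w m)
    = (\<Sum>m\<in>A01 \<union> A00. a m *\<^sub>R (u m + (if m \<in> A01 then r m *\<^sub>R w m else 0)))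
      + (\<Sum>m\<in>A10 \<union> A00. b m *\<^sub>R (w m + (if m \<in> A10 then s m *\<^sub>R u m else 0)))"
proof -
  have fin: "finite A01" "finite A10" "finite A00" using assms(1) K by auto
  have "(\<Sum>m\<in>K. a m *\<^sub>R u m + b m *\<^sub>R w m)
      = (\<Sum>m\<in>A01. a m *\<^sub>R (u m + r m *\<^sub>R w m)) + (\<Sum>m\<in>A10. b m *\<^sub>R (w m + s m *\<^sub>R u m))
        + (\<Sum>m\<in>A00. a m *\<^sub>R u m) + (\<Sum>m\<in>A00. b m *\<^sub>R w m)"
    unfolding K using fin assms(3-5)
    by (simp add: sum.union_disjoint Int_Un_distrib2 sum.distrib r s scaleR_add_right add.commute)
  moreover have "(\<Sum>m\<in>A01 \<union> A00. a m *\<^sub>R (u m + (if m \<in> A01 then r m *\<^sub>R w m else 0)))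
      = (\<Sum>m\<in>A01. a m *\<^sub>R (u m + r m *\<^sub>R w m)) + (\<Sum>m\<in>A00. a m *\<^sub>R u m)"
    using fin assms(4) by (simp add: sum.union_disjoint) (auto intro!: sum.cong)
  moreover have "(\<Sum>m\<in>A10 \<union> A00. b m *\<^sub>R (w m + (if m \<in> A10 then s m *\<^sub>R u m else 0)))
      = (\<Sum>m\<in>A10. b m *\<^sub>R (w m + s m *\<^sub>R u m)) + (\<Sum>m\<in>A00. b m *\<^sub>R w m)"
    using fin assms(5) by (simp add: sum.union_disjoint) (auto intro!: sum.cong)
  ultimately show ?thesis by (simp add: ac_simps)
qed

locale reduced_KKT_sequence =
  fixes f :: "'a::euclidean_space \<Rightarrow> real" and h g F1 F2 :: "nat \<Rightarrow> 'a \<Rightarrow> real"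
    and I J :: "nat set" and k :: nat and x :: "nat \<Rightarrow> 'a" and xbar :: 'a
    and lam mu a b :: "nat \<Rightarrow> nat \<Rightarrow> real"
  assumes finite_I: "finite I" and finite_J: "finite J"
    and reduced: "\<And>l. reduced_KKT f h I g J F1 F2 k (x l) (lam l) (mu l) (a l) (b l)"
    and x_tendsto: "x \<longlonglongrightarrow> xbar"
    and feasible: "xbar \<in> MPOC_feasible h I g J F1 F2 k"
    and LICQ_xbar: "LICQ h I g J F1 F2 k xbar"
    and isCont_grad_f: "isCont (grad f) xbar"
    and isCont_grad_h: "\<And>i. i \<in> I \<Longrightarrow> isCont (grad (h i)) xbar"
    and isCont_g: "\<And>j. j \<in> J \<Longrightarrow> isCont (g j) xbar \<and> isCont (grad (g j)) xbar"
    and isCont_F: "\<And>m. m < k \<Longrightarrow> isCont (F1 m) xbar \<and> isCont (F2 m) xbar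
      \<and> isCont (grad (F1 m)) xbar \<and> isCont (grad (F2 m)) xbar"
begin

abbreviation "A01 \<equiv> a01 F1 F2 k xbar"
abbreviation "A10 \<equiv> a10 F1 F2 k xbar"
abbreviation "A00 \<equiv> a00 F1 F2 k xbar"

lemma
  fixes l :: nat
  shows grad_f_eq: "grad f (x l) = (\<Sum>i\<in>I. lam l i *\<^sub>R grad (h i) (x l)) + (\<Sum>j\<in>J. mu l j *\<^sub>R grad (g j) (x l))
       + (\<Sum>m<k. a l m *\<^sub>R grad (F1 m) (x l) + b l m *\<^sub>R grad (F2 m) (x l))"
    and mu_nonneg: "j \<in> J \<Longrightarrow> mu l j \<ge> 0"
    and mu_complementary: "j \<in> J \<Longrightarrow> mu l j * g j (x l) = 0"
    and b_nonpos: "m < k \<Longrightarrow> a l m \<noteq> 0 \<Longrightarrow> b l m \<le> 0"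
    and b_eq: "m < k \<Longrightarrow> F2 m (x l) > 0 \<Longrightarrow> b l m = a l m * (F1 m (x l) / F2 m (x l))"
    and a_eq: "m < k \<Longrightarrow> F1 m (x l) \<noteq> 0 \<Longrightarrow> a l m = b l m * (F2 m (x l) / F1 m (x l))"
  using reduced[of l] unfolding reduced_KKT_def by blast+

lemma tendsto_along_x: "isCont \<phi> xbar \<Longrightarrow> (\<lambda>l. \<phi> (x l)) \<longlonglongrightarrow> \<phi> xbar"
  by (rule isCont_tendsto_compose[OF _ x_tendsto])

lemma eventually_inactive_mu_vanish:
  "eventually (\<lambda>l. \<forall>j\<in>J - J0 g J xbar. mu l j = 0) sequentially"
proof (rule eventually_ball_finite, use finite_J in simp, intro ballI)
  fix j assume j: "j \<in> J - J0 g J xbar"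
  with feasible have "g j xbar > 0" by (auto simp: MPOC_feasible_def J0_def less_le)
  moreover have "(\<lambda>l. g j (x l)) \<longlonglongrightarrow> g j xbar"
    using j isCont_g by (simp add: tendsto_along_x)
  ultimately have "eventually (\<lambda>l. g j (x l) > 0) sequentially"
    by (simp add: order_tendstoD(1))
  then show "eventually (\<lambda>l. mu l j = 0) sequentially"
    by eventually_elim (use mu_complementary j in fastforce)
qed

lemma eventually_a01_F2_pos: "eventually (\<lambda>l. \<forall>m\<in>A01. F2 m (x l) > 0) sequentially"
  by (intro eventually_ball_finite ballI order_tendstoD(1)[OF tendsto_along_x])
     (auto simp: a01_def isCont_F)

lemma eventually_a10_F1_nonzero: "eventually (\<lambda>l. \<forall>m\<in>A10. F1 m (x l) \<noteq> 0) sequentially"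
  by (intro eventually_ball_finite ballI tendsto_imp_eventually_ne[OF tendsto_along_x])
     (auto simp: a10_def isCont_F)

\<comment> \<open>For \<open>m \<in> a01\<close> the pair of gradients collapses to a single one, since eventually
  \<open>b m = a m F1 m / F2 m\<close>; the correction term vanishes in the limit because \<open>F1 m xbar = 0\<close>.
  Symmetrically for \<open>a10\<close>.\<close>
definition approx_grads :: "nat \<Rightarrow> constraint_kind \<times> nat \<Rightarrow> 'a" where
  "approx_grads l = tagged_family (\<lambda>i. grad (h i) (x l)) (\<lambda>j. grad (g j) (x l))
     (\<lambda>m. grad (F1 m) (x l) + (if m \<in> A01 then (F1 m (x l) / F2 m (x l)) *\<^sub>R grad (F2 m) (x l) else 0))
     (\<lambda>m. grad (F2 m) (x l) + (if m \<in> A10 then (F2 m (x l) / F1 m (x l)) *\<^sub>R grad (F1 m) (x l) else 0))"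

definition multipliers :: "nat \<Rightarrow> constraint_kind \<times> nat \<Rightarrow> real" where
  "multipliers l = tagged_family (lam l) (mu l) (a l) (b l)"

lemma tendsto_plus_ratio_scaled:
  fixes G H :: "'a \<Rightarrow> 'a" and u w :: "'a \<Rightarrow> real"
  assumes "isCont G xbar" "isCont H xbar" "isCont u xbar" "isCont w xbar" "u xbar = 0" "w xbar \<noteq> 0"
  shows "(\<lambda>l. G (x l) + (u (x l) / w (x l)) *\<^sub>R H (x l)) \<longlonglongrightarrow> G xbar"
proof -
  have "(\<lambda>l. G (x l) + (u (x l) / w (x l)) *\<^sub>R H (x l)) \<longlonglongrightarrow> G xbar + (u xbar / w xbar) *\<^sub>R H xbar"
    using assms by (intro tendsto_intros tendsto_along_x)
  with assms(5) show ?thesis by simp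
qed

lemma approx_grads_tendsto:
  assumes "p \<in> LICQ_index I g J F1 F2 k xbar"
  shows "(\<lambda>l. approx_grads l p) \<longlonglongrightarrow> constraint_grads h g F1 F2 xbar p"
proof -
  obtain kind i where p: "p = (kind, i)" by fastforce
  show ?thesis
  proof (cases kind)
    case Equality
    with assms p show ?thesis
      by (auto simp: LICQ_index_def tagged_index_def approx_grads_def constraint_grads_def
          intro: tendsto_along_x isCont_grad_h)
  next
    case Inequality
    with assms p show ?thesis
      by (auto simp: LICQ_index_def tagged_index_def J0_def approx_grads_def constraint_grads_def
          intro: tendsto_along_x dest: isCont_g)
  next
    case Orth1
    then have "i \<in> A01 \<union> A00" using assms p by (auto simp: LICQ_index_def tagged_index_def)
    with isCont_F[of i] show ?thesis
      by (auto simp: p Orth1 approx_grads_def constraint_grads_def a01_def a00_def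
          intro!: tendsto_plus_ratio_scaled tendsto_along_x)
  next
    case Orth2
    then have "i \<in> A10 \<union> A00" using assms p by (auto simp: LICQ_index_def tagged_index_def)
    with isCont_F[of i] show ?thesis
      by (auto simp: p Orth2 approx_grads_def constraint_grads_def a10_def a00_def
          intro!: tendsto_plus_ratio_scaled tendsto_along_x)
  qed
qed

lemma eventually_grad_f_eq:
  "eventually (\<lambda>l. grad f (x l)
     = (\<Sum>p\<in>LICQ_index I g J F1 F2 k xbar. multipliers l p *\<^sub>R approx_grads l p)) sequentially"
  using eventually_inactive_mu_vanish eventually_a01_F2_pos eventually_a10_F1_nonzero
proof eventually_elim
  case (elim l)
  have "(\<Sum>j\<in>J. mu l j *\<^sub>R grad (g j) (x l)) = (\<Sum>j\<in>J0 g J xbar. mu l j *\<^sub>R grad (g j) (x l))"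
    by (rule sum.mono_neutral_right) (use finite_J elim(1) in \<open>auto simp: J0_def\<close>)
  moreover have "(\<Sum>m<k. a l m *\<^sub>R grad (F1 m) (x l) + b l m *\<^sub>R grad (F2 m) (x l))
    = (\<Sum>m\<in>A01 \<union> A00. a l m *\<^sub>R (grad (F1 m) (x l)
         + (if m \<in> A01 then (F1 m (x l) / F2 m (x l)) *\<^sub>R grad (F2 m) (x l) else 0)))
      + (\<Sum>m\<in>A10 \<union> A00. b l m *\<^sub>R (grad (F2 m) (x l)
         + (if m \<in> A10 then (F2 m (x l) / F1 m (x l)) *\<^sub>R grad (F1 m) (x l) else 0)))"
    by (rule sum_pairs_regroup[OF _ MPOC_feasible_index_partition[OF feasible]])
       (use b_eq a_eq elim(2,3) in \<open>auto simp: a01_def a10_def a00_def\<close>)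
  ultimately show ?case
    using grad_f_eq[of l] finite_I finite_J
    unfolding LICQ_index_def multipliers_def approx_grads_def
    by (subst sum_tagged_index) (simp_all add: J0_def a01_def a10_def a00_def)
qed

theorem xbar_T_stationary: "T_stationary f h I g J F1 F2 k xbar"
proof -
  let ?P = "LICQ_index I g J F1 F2 k xbar"
  obtain cb where cb: "\<And>p. p \<in> ?P \<Longrightarrow> (\<lambda>l. multipliers l p) \<longlonglongrightarrow> cb p"
    and grad: "grad f xbar = (\<Sum>p\<in>?P. cb p *\<^sub>R constraint_grads h g F1 F2 xbar p)"
    using independent_family_coefficients_tendsto[OF finite_LICQ_index[OF finite_I finite_J]
        LICQ_imp_independent_family[OF finite_I finite_J LICQ_xbar] approx_grads_tendsto
        tendsto_along_x[OF isCont_grad_f] eventually_grad_f_eq] by blast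
  have "cb (Inequality, j) \<ge> 0" if "j \<in> J0 g J xbar" for j
  proof (rule tendsto_lowerbound)
    show "(\<lambda>l. mu l j) \<longlonglongrightarrow> cb (Inequality, j)"
      using cb[of "(Inequality, j)"] that by (simp add: multipliers_def LICQ_index_def tagged_index_def)
    show "eventually (\<lambda>l. mu l j \<ge> 0) sequentially"
      using that by (simp add: mu_nonneg J0_def)
  qed simp
  moreover have "cb (Orth1, m) = 0 \<or> cb (Orth2, m) \<le> 0" if m: "m \<in> A00" for m
  proof (cases "cb (Orth1, m) = 0")
    case False
    have a: "(\<lambda>l. a l m) \<longlonglongrightarrow> cb (Orth1, m)" and b: "(\<lambda>l. b l m) \<longlonglongrightarrow> cb (Orth2, m)"
      using cb[of "(Orth1, m)"] cb[of "(Orth2, m)"] m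
      by (simp_all add: multipliers_def LICQ_index_def tagged_index_def)
    have "eventually (\<lambda>l. a l m \<noteq> 0) sequentially"
      using tendsto_imp_eventually_ne[OF a False] .
    then have "eventually (\<lambda>l. b l m \<le> 0) sequentially"
      by eventually_elim (use b_nonpos m in \<open>auto simp: a00_def\<close>)
    with b have "cb (Orth2, m) \<le> 0" by (rule tendsto_upperbound) simp
    then show ?thesis ..
  qed simp
  moreover note grad[unfolded sum_LICQ_index_constraint_grads[OF finite_I finite_J]]
  ultimately show ?thesis
    unfolding T_stationary_def using feasible by (intro conjI exI ballI) blast+
qed

end

lemma C2_imp_continuity:
  assumes "C2 \<phi>"
  shows "\<phi> differentiable at y" and "isCont \<phi> y" and "isCont (grad \<phi>) y"
  using assms unfolding C2_def by (auto intro: differentiable_imp_continuous_within)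

theorem mainTheorem10:
  fixes f :: "real^'n \<Rightarrow> real"
    and h g F1 F2 :: "nat \<Rightarrow> real^'n \<Rightarrow> real"
    and I J :: "nat set" and k :: nat
    and t :: "nat \<Rightarrow> real" and x :: "nat \<Rightarrow> real^'n" and xbar :: "real^'n"
  assumes "finite I" and "finite J"
    and "C2 f" and "\<forall>i\<in>I. C2 (h i)" and "\<forall>j\<in>J. C2 (g j)"
    and "\<forall>m<k. C2 (F1 m) \<and> C2 (F2 m)"
    and "\<forall>l. t l > 0" and "t \<longlonglongrightarrow> 0"
    and "\<forall>l. KKT_reg f h I g J F1 F2 k (t l) (x l)"
    and "x \<longlonglongrightarrow> xbar"
    and "xbar \<in> MPOC_feasible h I g J F1 F2 k"
    and "LICQ h I g J F1 F2 k xbar"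
  shows "T_stationary f h I g J F1 F2 k xbar"
proof -
  have "\<forall>l. \<exists>lam mu a b. reduced_KKT f h I g J F1 F2 k (x l) lam mu a b"
    using KKT_reg_imp_reduced_KKT assms(6,7,9) C2_imp_continuity(1) by blast
  then obtain lam mu a b
    where "\<And>l. reduced_KKT f h I g J F1 F2 k (x l) (lam l) (mu l) (a l) (b l)" by metis
  then interpret reduced_KKT_sequence f h g F1 F2 I J k x xbar lam mu a b
    using assms(1-6,10-12) by unfold_locales (simp_all add: C2_imp_continuity)
  show ?thesis by (rule xbar_T_stationary)
qed

end
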